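(* Let $\phi(x_1,\dots,x_n)=\bigwedge_{i=1}^m (c_{i1}\lor\cdots\lor c_{ik_i})$ be a CNF formula, where each $c_{ij}$ is a literal $x_l$ or $\lnot x_l$. Introduce fresh variables $y_1,\dots,y_m$ and define the 2-CNF formula $$\psi(x_1,\dots,x_n,y_1,\dots,y_m)=\bigwedge_{i=1}^m\bigwedge_{j=1}^{k_i}(\lnot c_{ij}\lor\lnot y_i).$$ Then $$\#(\phi)=\#\mathrm{SAT}_\pm\big(\psi,\{y_1,\dots,y_m\}\big),$$ where $\#(\phi)$ is the number of satisfying assignments of $\phi$.
   Context: For a CNF formula $f$ on variables $z_1,\dots,z_N$ and a set $S$ of its variables, $\#\mathrm{SAT}_\pm(f,S)$ is the sum of $f(\vec z)$ over assignments $\vec z$ in which the XOR of the variables in $S$ is $0$, minus the sum of $f(\vec z)$ over assignments in which that XOR is $1$. *)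

theory Defs
  imports Main
begin

text \<open>A literal is a pair (variable, polarity): (v, True) is the positive literal v,
  (v, False) is the negative literal "not v". A clause is a list of literals,
  a CNF formula a list of clauses.\<close>

type_synonym 'v lit = "'v \<times> bool"
type_synonym 'v clause = "'v lit list"
type_synonym 'v cnf = "'v clause list"

definition lit_val :: "('v \<Rightarrow> bool) \<Rightarrow> 'v lit \<Rightarrow> bool" where
  "lit_val a l = (a (fst l) = snd l)"

definition neg_lit :: "'v lit \<Rightarrow> 'v lit" where
  "neg_lit l = (fst l, \<not> snd l)"

definition cnf_val :: "('v \<Rightarrow> bool) \<Rightarrow> 'v cnf \<Rightarrow> bool" where
  "cnf_val a f = (\<forall>c\<in>set f. \<exists>l\<in>set c. lit_val a l)"

definition assignments :: "'v set \<Rightarrow> ('v \<Rightarrow> bool) set" where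
  "assignments V = {a. \<forall>v. v \<notin> V \<longrightarrow> a v = False}"

definition count_sat :: "'v set \<Rightarrow> 'v cnf \<Rightarrow> nat" where
  "count_sat V f = card {a \<in> assignments V. cnf_val a f}"

definition xor_set :: "('v \<Rightarrow> bool) \<Rightarrow> 'v set \<Rightarrow> bool" where
  "xor_set a S = odd (card {v\<in>S. a v})"

definition sharp_sat_pm :: "'v set \<Rightarrow> 'v cnf \<Rightarrow> 'v set \<Rightarrow> int" where
  "sharp_sat_pm V f S =
     int (card {a \<in> assignments V. cnf_val a f \<and> \<not> xor_set a S})
   - int (card {a \<in> assignments V. cnf_val a f \<and> xor_set a S})"

text \<open>The 2-CNF psi: variables Inl l for x_l, Inr i for y_i; for each clause i and
  each literal c_ij of it, the clause (not c_ij or not y_i).\<close>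
definition psi :: "nat cnf \<Rightarrow> (nat + nat) cnf" where
  "psi phi = concat (map (\<lambda>i. map (\<lambda>l. [neg_lit (apfst Inl l), (Inr i, False)]) (phi ! i))
                       [0..<length phi])"

end

theory Submission
  imports Defs
begin

text \<open>Fix an assignment x of the x-variables and let U be the set of clauses of phi that x
  falsifies. An extension of x by the y-variables true exactly on T satisfies psi iff
  T \<subseteq> U, and it enters the signed count with weight (-1)^|T|. Summing over T gives
  \<Sum>T\<subseteq>U. (-1)^|T|, which is 1 if U is empty, i.e. if x satisfies phi, and 0 otherwise.\<close>

lemma sum_Pow_minus_one_power_card:
  assumes "finite U"
  shows "(\<Sum>T\<in>Pow U. (-1::'a::comm_ring_1) ^ card T) = (if U = {} then 1 else 0)"
proof -
  have "(\<Prod>x\<in>U. (1::'a) - 1) = (\<Sum>T\<in>Pow U. (-1) ^ card T * (\<Prod>x\<in>T. 1) * (\<Prod>x\<in>U-T. 1))"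
    by (rule prod_diff_conv_sum[OF assms])
  then show ?thesis
    using assms by (simp add: power_0_left card_eq_0_iff)
qed

lemma bij_betw_Pow_assignments: "bij_betw (\<lambda>T v. v \<in> T) (Pow V) (assignments V)"
proof (rule bij_betw_imageI)
  show "inj_on (\<lambda>T v. v \<in> T) (Pow V)"
    by (rule inj_onI) (simp add: fun_eq_iff set_eq_iff)
  show "(\<lambda>T v. v \<in> T) ` Pow V = assignments V"
  proof
    show "assignments V \<subseteq> (\<lambda>T v. v \<in> T) ` Pow V"
    proof
      fix a assume "a \<in> assignments V"
      then have "a = (\<lambda>v. v \<in> {v\<in>V. a v})" "{v\<in>V. a v} \<in> Pow V"
        by (auto simp: assignments_def)
      then show "a \<in> (\<lambda>T v. v \<in> T) ` Pow V" by blast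
    qed
  qed (auto simp: assignments_def)
qed

lemma finite_assignments: "finite V \<Longrightarrow> finite (assignments V)"
  by (metis bij_betw_finite bij_betw_Pow_assignments finite_Pow_iff)

lemma bij_betw_case_sum_assignments:
  "bij_betw (\<lambda>(x, y). case_sum x y) (assignments A \<times> assignments B)
     (assignments (Inl ` A \<union> Inr ` B))"
proof (rule bij_betw_imageI)
  show "inj_on (\<lambda>(x, y). case_sum x y) (assignments A \<times> assignments B)"
  proof (rule inj_onI, clarsimp)
    fix x y x' y' :: "_ \<Rightarrow> bool"
    assume "case_sum x y = case_sum x' y'"
    then have "case_sum x y \<circ> Inl = case_sum x' y' \<circ> Inl" "case_sum x y \<circ> Inr = case_sum x' y' \<circ> Inr"
      by simp_all
    then show "x = x' \<and> y = y'" by (metis case_sum_o_inj)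
  qed
  show "(\<lambda>(x, y). case_sum x y) ` (assignments A \<times> assignments B) = assignments (Inl ` A \<union> Inr ` B)"
  proof
    show "assignments (Inl ` A \<union> Inr ` B) \<subseteq> (\<lambda>(x, y). case_sum x y) ` (assignments A \<times> assignments B)"
    proof
      fix a assume a: "a \<in> assignments (Inl ` A \<union> Inr ` B)"
      have "a = case_sum (a \<circ> Inl) (a \<circ> Inr)"
        by (rule ext) (simp split: sum.split)
      moreover have "(a \<circ> Inl, a \<circ> Inr) \<in> assignments A \<times> assignments B"
        using a by (auto simp: assignments_def)
      ultimately show "a \<in> (\<lambda>(x, y). case_sum x y) ` (assignments A \<times> assignments B)"
        by force
    qed
  next
    show "(\<lambda>(x, y). case_sum x y) ` (assignments A \<times> assignments B) \<subseteq> assignments (Inl ` A \<union> Inr ` B)"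
    proof (clarsimp simp: assignments_def)
      fix x y v
      assume "\<forall>v. v \<notin> A \<longrightarrow> \<not> x v" "\<forall>v. v \<notin> B \<longrightarrow> \<not> y v"
        "v \<notin> Inl ` A" "v \<notin> Inr ` B" "case_sum x y v"
      then show False by (cases v) auto
    qed
  qed
qed

definition sat_sign :: "'v cnf \<Rightarrow> 'v set \<Rightarrow> ('v \<Rightarrow> bool) \<Rightarrow> int" where
  "sat_sign f S a = (if cnf_val a f then (if xor_set a S then -1 else 1) else 0)"

lemma sharp_sat_pm_eq_sum_sat_sign:
  assumes "finite V"
  shows "sharp_sat_pm V f S = (\<Sum>a\<in>assignments V. sat_sign f S a)"
proof -
  have "(\<Sum>a\<in>assignments V. sat_sign f S a)
      = (\<Sum>a\<in>assignments V. (if cnf_val a f \<and> \<not> xor_set a S then 1 else 0)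
                           - (if cnf_val a f \<and> xor_set a S then 1 else 0))"
    by (rule sum.cong) (auto simp: sat_sign_def)
  also have "\<dots> = sharp_sat_pm V f S"
    using finite_assignments[OF assms]
    by (simp add: sum_subtractf sum.If_cases Int_def sharp_sat_pm_def)
  finally show ?thesis by simp
qed

lemma count_sat_eq_sum:
  assumes "finite V"
  shows "int (count_sat V f) = (\<Sum>a\<in>assignments V. if cnf_val a f then 1 else 0)"
  using finite_assignments[OF assms] by (simp add: count_sat_def sum.If_cases Int_def)

definition falsified_clauses :: "('v \<Rightarrow> bool) \<Rightarrow> 'v cnf \<Rightarrow> nat set" where
  "falsified_clauses a f = {i. i < length f \<and> \<not> (\<exists>l\<in>set (f ! i). lit_val a l)}"

lemma cnf_val_iff_falsified_clauses_empty: "cnf_val a f \<longleftrightarrow> falsified_clauses a f = {}"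
  by (auto simp: falsified_clauses_def cnf_val_def in_set_conv_nth) (meson nth_mem)

lemma cnf_val_psi_iff:
  assumes "T \<subseteq> {..<length phi}"
  shows "cnf_val (case_sum x (\<lambda>i. i \<in> T)) (psi phi) \<longleftrightarrow> T \<subseteq> falsified_clauses x phi"
  using assms
  by (auto simp: cnf_val_def psi_def lit_val_def neg_lit_def falsified_clauses_def subset_iff)

lemma xor_set_case_sum_Inr:
  assumes "finite T"
  shows "xor_set (case_sum x (\<lambda>i. i \<in> T)) (Inr ` B) = odd (card (T \<inter> B))"
proof -
  have "{v\<in>Inr ` B. case_sum x (\<lambda>i. i \<in> T) v} = Inr ` (T \<inter> B)"
    by auto
  then show ?thesis
    by (simp add: xor_set_def card_image)
qed

lemma sum_sat_sign_psi:
  fixes phi :: "nat cnf"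
  defines "m \<equiv> length phi"
  shows "(\<Sum>y\<in>assignments {..<m}. sat_sign (psi phi) (Inr ` {..<m}) (case_sum x y))
       = (if cnf_val x phi then 1 else 0)"
proof -
  let ?U = "falsified_clauses x phi"
  have U_sub: "?U \<subseteq> {..<m}"
    by (auto simp: falsified_clauses_def m_def)
  have sign_eq: "sat_sign (psi phi) (Inr ` {..<m}) (case_sum x (\<lambda>i. i \<in> T))
        = (if T \<subseteq> ?U then (-1) ^ card T else 0)" if "T \<in> Pow {..<m}" for T
  proof -
    have "finite T" "T \<inter> {..<m} = T"
      using that finite_subset by auto
    then show ?thesis
      using that by (simp add: sat_sign_def cnf_val_psi_iff m_def xor_set_case_sum_Inr)
  qed
  have "(\<Sum>y\<in>assignments {..<m}. sat_sign (psi phi) (Inr ` {..<m}) (case_sum x y))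
      = (\<Sum>T\<in>Pow {..<m}. sat_sign (psi phi) (Inr ` {..<m}) (case_sum x (\<lambda>i. i \<in> T)))"
    by (rule sum.reindex_bij_betw[OF bij_betw_Pow_assignments, symmetric])
  also have "\<dots> = (\<Sum>T\<in>Pow {..<m}. if T \<subseteq> ?U then (-1) ^ card T else 0)"
    by (rule sum.cong) (simp_all add: sign_eq)
  also have "\<dots> = (\<Sum>T\<in>Pow ?U. (-1) ^ card T)"
  proof -
    have "{T\<in>Pow {..<m}. T \<subseteq> ?U} = Pow ?U"
      using U_sub by auto
    then show ?thesis
      by (simp add: sum.inter_filter[symmetric])
  qed
  also have "\<dots> = (if cnf_val x phi then 1 else 0)"
    using finite_subset[OF U_sub]
    by (simp add: sum_Pow_minus_one_power_card cnf_val_iff_falsified_clauses_empty)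
  finally show ?thesis .
qed

theorem mainTheorem3:
  fixes n :: nat and phi :: "nat cnf"
  assumes "\<forall>c\<in>set phi. \<forall>l\<in>set c. fst l < n"
  shows "int (count_sat {..<n} phi)
         = sharp_sat_pm (Inl ` {..<n} \<union> Inr ` {..<length phi}) (psi phi) (Inr ` {..<length phi})"
proof -
  let ?m = "length phi" and ?sign = "sat_sign (psi phi) (Inr ` {..<length phi})"
  have "int (count_sat {..<n} phi) = (\<Sum>x\<in>assignments {..<n}. if cnf_val x phi then 1 else 0)"
    by (simp add: count_sat_eq_sum)
  also have "\<dots> = (\<Sum>x\<in>assignments {..<n}. \<Sum>y\<in>assignments {..<?m}. ?sign (case_sum x y))"
    by (simp add: sum_sat_sign_psi)
  also have "\<dots> = (\<Sum>(x, y)\<in>assignments {..<n} \<times> assignments {..<?m}. ?sign (case_sum x y))"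
    by (rule sum.cartesian_product)
  also have "\<dots> = (\<Sum>a\<in>assignments (Inl ` {..<n} \<union> Inr ` {..<?m}). ?sign a)"
    using sum.reindex_bij_betw[OF bij_betw_case_sum_assignments, of ?sign]
    by (simp add: case_prod_unfold)
  also have "\<dots> = sharp_sat_pm (Inl ` {..<n} \<union> Inr ` {..<?m}) (psi phi) (Inr ` {..<?m})"
    by (simp add: sharp_sat_pm_eq_sum_sat_sign)
  finally show ?thesis .
qed

end
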